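(* Let $\Lambda=(\lambda_i)_{i=0}^\infty$ be a strictly increasing sequence of non-negative reals with $\lambda_0=0$ and $\sum_{i=1}^\infty 1/\lambda_i<\infty$, and let $M(\Lambda)=\overline{\operatorname{span}}\{t^{\lambda_i}: i\geq 0\}\subseteq C[0,1]$ with the sup-norm. Then $M(\Lambda)$ is not almost square.
   Context: $C[0,1]$ is the space of real-valued continuous functions on $[0,1]$ with the sup-norm. A Banach space $X$ with closed unit ball $B_X$ and unit sphere $S_X$ is almost square if for every finite collection $x_1,\dots,x_k\in S_X$ there exists a sequence $(y_n)$ in $B_X$ such that $\|y_n\|\to 1$ and $\|x_i\pm y_n\|\to 1$ for every $i\in\{1,\dots,k\}$. *)

theory Defs
  imports "HOL-Analysis.Analysis"
begin

text \<open>C[0,1] is modelled by functions real => real that are continuous on [0,1];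
  only their values on [0,1] matter, via the sup-norm below.\<close>

definition C01 :: "(real \<Rightarrow> real) set" where
  "C01 = {f. continuous_on {0..1} f}"

definition supnorm :: "(real \<Rightarrow> real) \<Rightarrow> real" where
  "supnorm f = (SUP t\<in>{0..1}. \<bar>f t\<bar>)"

text \<open>The monomial t^a on [0,1], with the convention t^0 = 1 (note 0 powr 0 = 0 in Isabelle).\<close>
definition mon :: "real \<Rightarrow> real \<Rightarrow> real" where
  "mon a t = (if a = 0 then 1 else t powr a)"

definition Muntz_space :: "(nat \<Rightarrow> real) \<Rightarrow> (real \<Rightarrow> real) set" where
  "Muntz_space \<Lambda> = {f \<in> C01. \<forall>\<epsilon>>0. \<exists>n c. supnorm (\<lambda>t. f t - (\<Sum>i<n. c i * mon (\<Lambda> i) t)) < \<epsilon>}"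

definition almost_square :: "(real \<Rightarrow> real) set \<Rightarrow> bool" where
  "almost_square X \<longleftrightarrow>
    (\<forall>F. finite F \<and> F \<subseteq> X \<and> (\<forall>x\<in>F. supnorm x = 1) \<longrightarrow>
      (\<exists>y :: nat \<Rightarrow> real \<Rightarrow> real.
         (\<forall>n. y n \<in> X \<and> supnorm (y n) \<le> 1) \<and>
         (\<lambda>n. supnorm (y n)) \<longlonglongrightarrow> 1 \<and>
         (\<forall>x\<in>F. (\<lambda>n. supnorm (\<lambda>t. x t + y n t)) \<longlonglongrightarrow> 1 \<and> (\<lambda>n. supnorm (\<lambda>t. x t - y n t)) \<longlonglongrightarrow> 1)))"

end

theory Submission
  imports Defs
begin

text \<open>Since \<open>\<lambda>\<^sub>0 = 0\<close>, the constant function 1 lies in \<open>M(\<Lambda>)\<close>. For every real continuous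
  \<open>y\<close>, at each point one of \<open>\<bar>1 + y t\<bar>\<close>, \<open>\<bar>1 - y t\<bar>\<close> equals \<open>1 + \<bar>y t\<bar>\<close>, so
  \<open>max \<parallel>1 + y\<parallel> \<parallel>1 - y\<parallel> \<ge> 1 + \<parallel>y\<parallel>\<close>. Hence \<open>\<parallel>y\<^sub>n\<parallel> \<longrightarrow> 1\<close> and \<open>\<parallel>1 \<plusminus> y\<^sub>n\<parallel> \<longrightarrow> 1\<close> cannot
  hold together, and the test family \<open>{1}\<close> witnesses that no subspace of \<open>C[0,1]\<close> containing
  the constants is almost square.\<close>

lemma abs_le_supnorm:
  assumes "continuous_on {0..1} g" "t \<in> {0..1}"
  shows "\<bar>g t\<bar> \<le> supnorm g"
proof -
  have "compact ((\<lambda>t. \<bar>g t\<bar>) ` {0..1})"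
    using assms(1) by (intro compact_continuous_image continuous_intros) auto
  then have "bdd_above ((\<lambda>t. \<bar>g t\<bar>) ` {0..1})"
    by (simp add: bounded_imp_bdd_above compact_imp_bounded)
  then show ?thesis
    unfolding supnorm_def using assms(2) by (rule cSUP_upper[rotated])
qed

lemma supnorm_le:
  assumes "\<And>t. t \<in> {0..1} \<Longrightarrow> \<bar>g t\<bar> \<le> B"
  shows "supnorm g \<le> B"
  unfolding supnorm_def by (rule cSUP_least) (use assms in auto)

lemma supnorm_const_one: "supnorm (\<lambda>t. 1) = 1"
  by (simp add: supnorm_def)

lemma supnorm_le_max_supnorm_one_plus_minus:
  assumes "continuous_on {0..1} y"
  shows "supnorm y \<le> max (supnorm (\<lambda>t. 1 + y t)) (supnorm (\<lambda>t. 1 - y t)) - 1"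
proof (rule supnorm_le)
  fix t :: real
  assume t: "t \<in> {0..1}"
  have "\<bar>1 + y t\<bar> \<le> supnorm (\<lambda>t. 1 + y t)"
    using assms t by (intro abs_le_supnorm continuous_intros)
  moreover have "\<bar>1 - y t\<bar> \<le> supnorm (\<lambda>t. 1 - y t)"
    using assms t by (intro abs_le_supnorm continuous_intros)
  ultimately show "\<bar>y t\<bar> \<le> max (supnorm (\<lambda>t. 1 + y t)) (supnorm (\<lambda>t. 1 - y t)) - 1"
    by linarith
qed

lemma not_almost_square_if_const_one_mem:
  assumes "X \<subseteq> C01" "(\<lambda>t. 1) \<in> X"
  shows "\<not> almost_square X"
proof
  assume "almost_square X"
  then obtain y where y: "\<And>n. y n \<in> X" "(\<lambda>n. supnorm (y n)) \<longlonglongrightarrow> 1"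
    and plus: "(\<lambda>n. supnorm (\<lambda>t. 1 + y n t)) \<longlonglongrightarrow> 1"
    and minus: "(\<lambda>n. supnorm (\<lambda>t. 1 - y n t)) \<longlonglongrightarrow> 1"
    using assms(2) supnorm_const_one
    unfolding almost_square_def by (elim allE[of _ "{\<lambda>t. 1}"]) auto
  have "(\<lambda>n. max (supnorm (\<lambda>t. 1 + y n t)) (supnorm (\<lambda>t. 1 - y n t)) - 1) \<longlonglongrightarrow> max 1 1 - 1"
    by (intro tendsto_intros plus minus)
  moreover have "supnorm (y n) \<le> max (supnorm (\<lambda>t. 1 + y n t)) (supnorm (\<lambda>t. 1 - y n t)) - 1" for n
    using y(1)[of n] assms(1) by (intro supnorm_le_max_supnorm_one_plus_minus) (auto simp: C01_def)
  ultimately have "1 \<le> max 1 1 - (1::real)"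
    using y(2) by (intro LIMSEQ_le) auto
  then show False
    by simp
qed

lemma Muntz_space_subset_C01: "Muntz_space \<Lambda> \<subseteq> C01"
  by (auto simp: Muntz_space_def)

lemma const_one_mem_Muntz_space:
  assumes "\<Lambda> 0 = 0"
  shows "(\<lambda>t. 1) \<in> Muntz_space \<Lambda>"
  unfolding Muntz_space_def C01_def
proof (intro CollectI conjI allI impI)
  show "continuous_on {0..1} (\<lambda>t. 1 :: real)"
    by (intro continuous_intros)
  fix \<epsilon> :: real
  assume "\<epsilon> > 0"
  then show "\<exists>n c. supnorm (\<lambda>t. 1 - (\<Sum>i<n. c i * mon (\<Lambda> i) t)) < \<epsilon>"
    by (intro exI[of _ 1] exI[of _ "\<lambda>_. 1"]) (simp add: mon_def assms supnorm_def)
qed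

theorem mainTheorem5:
  fixes \<Lambda> :: "nat \<Rightarrow> real"
  assumes "strict_mono \<Lambda>"
    and "\<Lambda> 0 = 0"
    and "\<forall>i. \<Lambda> i \<ge> 0"
    and "summable (\<lambda>i. 1 / \<Lambda> (Suc i))"
  shows "\<not> almost_square (Muntz_space \<Lambda>)"
  using Muntz_space_subset_C01 const_one_mem_Muntz_space[of \<Lambda>, OF assms(2)]
  by (rule not_almost_square_if_const_one_mem)

end
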